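(* Let $p>3$ be a prime and let $$F(p-1,p-1)=\frac{18p-15}{4^{4p-4}}\binom{6p-6}{3p-3}\binom{3p-3}{p-1}.$$ Then $F(p-1,p-1)\equiv 15p^2\big(-1-6p+8pq_p(2)\big)\pmod{p^4}$.
   Context: $q_p(2)=(2^{p-1}-1)/p$ is the Fermat quotient. (This is the value at $n=k=p-1$ of $F(n,k)=(-1)^{n+k}\frac{20n-2k+3}{4^{5n-k}}\frac{\binom{2n}{n}\binom{4n+2k}{2n+k}\binom{2n-k}{n}\binom{2n+k}{2k}}{\binom{2k}{k}}$.) Congruences between rationals modulo $p^m$ mean the difference is $p^m$ times a rational with denominator prime to $p$. *)

theory Defs
  imports Complex_Main "HOL-Computational_Algebra.Primes"
begin

definition rat_cong :: "rat \<Rightarrow> rat \<Rightarrow> int \<Rightarrow> bool" where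
  "rat_cong a b m \<longleftrightarrow> (\<exists>r::rat. a - b = of_int m * r \<and> coprime (snd (quotient_of r)) m)"

definition fermat_quotient2 :: "nat \<Rightarrow> rat" where
  "fermat_quotient2 p = (2 ^ (p - 1) - 1) / of_nat p"

end

theory Submission
  imports Defs "HOL-Number_Theory.Number_Theory"
begin

text \<open>
  Write (pn)! = p^n n! U(n), where U(n) is the product of the integers up to pn that are not
  multiples of p. Pairing jp + i with jp + (p - i) shows that each block of p - 1 consecutive
  factors of U(n) is congruent to (p-1)! modulo p^2, so U(n) \<equiv> (p-1)!^n (mod p^2). Comparing
  (6p-6)!, (3p-3)!, (2p-2)!, (p-1)! with (6p)!, (3p)!, (2p)!, p! gives the exact identity
  X (6p-1)(6p-5) U(3) U(2) U(1) = 5 p^2 U(6) for the binomial product X. Because of the factor p^2,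
  the congruence modulo p^4 reduces to one modulo p^2, where U(6) \<equiv> U(3) U(2) U(1) and, writing
  t = 2^(p-1) = 1 + pq by Fermat, also t^8 (6p-1)(8t-9-6p) \<equiv> 1.
\<close>

lemma fact_add_eq_fact_mult_pochhammer:
  "fact (m + k) = fact m * pochhammer (of_nat m + 1 :: 'a :: {comm_semiring_1,semiring_char_0}) k"
  by (simp only: pochhammer_fact pochhammer_product') (simp add: add.commute)

lemma pochhammer_of_nat_plus_1_eq_prod:
  "pochhammer (of_nat m + 1 :: 'a :: comm_semiring_1) k = (\<Prod>i\<in>{1..k}. of_nat (m + i))"
  unfolding pochhammer_prod
  by (rule prod.reindex_bij_witness[of _ "\<lambda>i. i - 1" Suc]) (auto simp: add_ac)

lemma prod_pair_reflect:
  fixes f :: "nat \<Rightarrow> 'a :: comm_monoid_mult"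
  shows "(\<Prod>i\<in>{1..2*h}. f i) = (\<Prod>i\<in>{1..h}. f i * f (2*h+1-i))"
proof -
  let ?r = "\<lambda>i. 2*h+1-i"
  have split: "{1..2*h} = {1..h} \<union> ?r ` {1..h}"
  proof (intro subset_antisym subsetI)
    fix x assume "x \<in> {1..2*h}"
    then show "x \<in> {1..h} \<union> ?r ` {1..h}"
    proof (cases "x \<le> h")
      case False
      then have "x = ?r (?r x)" "?r x \<in> {1..h}" using \<open>x \<in> {1..2*h}\<close> by auto
      then show ?thesis by blast
    qed simp
  qed auto
  have "inj_on ?r {1..h}" by (auto simp: inj_on_def)
  then have "(\<Prod>i\<in>?r ` {1..h}. f i) = (\<Prod>i\<in>{1..h}. f (?r i))"
    by (simp add: prod.reindex)
  moreover have "(\<Prod>i\<in>{1..2*h}. f i) = (\<Prod>i\<in>{1..h}. f i) * (\<Prod>i\<in>?r ` {1..h}. f i)"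
    unfolding split by (rule prod.union_disjoint) auto
  ultimately show ?thesis by (simp add: prod.distrib)
qed

lemma prod_block_cong_fact:
  assumes "odd p"
  shows "[(\<Prod>i\<in>{1..p-1}. int (j*p+i)) = fact (p-1)] (mod (int p)^2)"
proof -
  obtain h where h: "p = 2*h+1" using assms oddE by blast
  have pair_cong: "[int (j*p+i) * int (j*p+(p-i)) = int i * int (p-i)] (mod (int p)^2)"
    if "i \<le> p" for i
  proof -
    have "int (j*p+i) * int (j*p+(p-i)) - int i * int (p-i) = (int p)^2 * (int j^2 + int j)"
      using that by (simp add: of_nat_diff power2_eq_square algebra_simps)
    then show ?thesis by (simp add: cong_iff_dvd_diff)
  qed
  have "(\<Prod>i\<in>{1..p-1}. int (j*p+i)) = (\<Prod>i\<in>{1..h}. int (j*p+i) * int (j*p+(p-i)))"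
    using prod_pair_reflect[of "\<lambda>i. int (j*p+i)" h] h by simp
  also have "[\<dots> = (\<Prod>i\<in>{1..h}. int i * int (p-i))] (mod (int p)^2)"
    by (rule cong_prod) (use h pair_cong in auto)
  also have "(\<Prod>i\<in>{1..h}. int i * int (p-i)) = (\<Prod>i\<in>{1..p-1}. int i)"
    using prod_pair_reflect[of int h] h by simp
  also have "\<dots> = fact (p-1)"
    by (simp add: fact_prod)
  finally show ?thesis .
qed

definition prod_nonmultiples :: "nat \<Rightarrow> nat \<Rightarrow> int" where
  "prod_nonmultiples p n = (\<Prod>j<n. \<Prod>i\<in>{1..p-1}. int (j*p+i))"

lemma prod_nonmultiples_cong:
  assumes "odd p"
  shows "[prod_nonmultiples p n = fact (p-1) ^ n] (mod (int p)^2)"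
  unfolding prod_nonmultiples_def
  using cong_prod[of "{..<n}", OF prod_block_cong_fact[OF assms]] by simp

lemma fact_mult_eq_power_fact_prod_nonmultiples:
  assumes "p > 0"
  shows "fact (p*n) = int p ^ n * fact n * prod_nonmultiples p n"
proof (induction n)
  case (Suc n)
  have "(fact (p*Suc n) :: int) = fact (p*n) * pochhammer (int (p*n) + 1) p"
    using fact_add_eq_fact_mult_pochhammer[of "p*n" p] by (simp add: algebra_simps)
  also have "pochhammer (int (p*n) + 1) p = int (p*Suc n) * (\<Prod>i\<in>{1..p-1}. int (n*p+i))"
  proof -
    have "{1..p} = insert p {1..p-1}" using assms by auto
    then show ?thesis
      unfolding pochhammer_of_nat_plus_1_eq_prod[where 'a=int, simplified] using assms
      by (simp add: algebra_simps)
  qed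
  finally show ?case
    using Suc by (simp add: prod_nonmultiples_def algebra_simps)
qed (simp add: prod_nonmultiples_def)

lemma pochhammer_falling:
  "pochhammer (x - of_nat n + 1 :: 'a :: comm_ring_1) n = (\<Prod>i<n. x - of_nat i)"
  unfolding pochhammer_prod_rev
  by (rule prod.reindex_bij_witness[of _ Suc "\<lambda>i. i - 1"]) (auto simp: of_nat_diff algebra_simps)

lemma fact_mult_pred_mult_falling_eq:
  assumes "p > 0"
  shows "fact (n*(p-1)) * (\<Prod>i<n. int (n*p) - int i) = int p ^ n * fact n * prod_nonmultiples p n"
proof -
  have split: "n*(p-1) + n = p*n" using assms by (cases p) (simp_all add: algebra_simps)
  then have "int (n*(p-1)) + 1 = int (n*p) - int n + 1"
    by (metis add_diff_cancel_right' mult.commute of_nat_add)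
  then have "pochhammer (int (n*(p-1)) + 1) n = (\<Prod>i<n. int (n*p) - int i)"
    by (simp add: pochhammer_falling)
  then show ?thesis
    using fact_add_eq_fact_mult_pochhammer[of "n*(p-1)" n, where 'a=int] fact_mult_eq_power_fact_prod_nonmultiples[OF assms, of n] split
    by simp
qed

lemma multinomial_fact_eq:
  "of_nat (a+b+c choose (a+b)) * of_nat (a+b choose a) * fact a * fact b * fact c
     = (fact (a+b+c) :: 'a :: semiring_char_0)"
proof -
  have "fact (a+b) * fact c * (a+b+c choose (a+b)) = fact (a+b+c)"
    using binomial_fact_lemma[of "a+b" "a+b+c"] by simp
  moreover have "fact a * fact b * (a+b choose a) = fact (a+b)"
    using binomial_fact_lemma[of a "a+b"] by simp
  ultimately have "(a+b+c choose (a+b)) * (a+b choose a) * fact a * fact b * fact c = (fact (a+b+c) :: nat)"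
    by (metis mult.assoc mult.commute)
  from arg_cong[OF this, of "of_nat :: nat \<Rightarrow> 'a"] show ?thesis
    by (simp only: of_nat_mult of_nat_fact)
qed

lemma binomial_product_identity:
  assumes p0: "p > 0"
  defines "P \<equiv> int p" and "U \<equiv> prod_nonmultiples p"
  shows "int ((6*p-6) choose (3*p-3)) * int ((3*p-3) choose (p-1)) * (6*P-1) * (6*P-5)
           * (U 3 * U 2 * U 1) = 5 * P^2 * U 6"
proof -
  define m where "m = p - 1"
  define X where "X = int (6*m choose 3*m) * int (3*m choose m)"
  define V where "V = U 3 * U 2 * U 1"
  define A6 where "A6 = (6*P-5)*(6*P-4)*(6*P-3)*(6*P-2)*(6*P-1)*(6*P)"
  define A3 where "A3 = (3*P-2)*(3*P-1)*(3*P)"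
  define A2 where "A2 = (2*P-1)*(2*P)"
  define Q where "Q = A3 * A2 * P"
  have multinomial: "X * fact (3*m) * fact (2*m) * fact m = fact (6*m)"
  proof -
    have "m + 2*m + 3*m = 6*m" "m + 2*m = 3*m" by simp_all
    then show ?thesis
      using multinomial_fact_eq[of m "2*m" "3*m", where 'a=int] by (simp add: X_def mult_ac)
  qed
  have block: "fact (n*m) * (\<Prod>i<n. n*P - int i) = P^n * fact n * U n" for n
    using fact_mult_pred_mult_falling_eq[OF p0, of n] by (simp add: m_def P_def U_def)
  have "(\<Prod>i<6. 6*P - int i) = A6" by (simp add: A6_def eval_nat_numeral mult_ac)
  with block[of 6] have B6: "fact (6*m) * A6 = P^6 * 720 * U 6" by (simp add: fact_numeral)
  have "(\<Prod>i<3. 3*P - int i) = A3" by (simp add: A3_def eval_nat_numeral mult_ac)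
  with block[of 3] have B3: "fact (3*m) * A3 = P^3 * 6 * U 3" by (simp add: fact_numeral)
  have "(\<Prod>i<2. 2*P - int i) = A2" by (simp add: A2_def eval_nat_numeral mult_ac)
  with block[of 2] have B2: "fact (2*m) * A2 = P^2 * 2 * U 2" by (simp add: fact_numeral)
  have B1: "fact m * P = P * U 1"
    using block[of 1] by simp
  have "12 * P^6 * (X * V * A6) = X * (P^3 * 6 * U 3) * (P^2 * 2 * U 2) * (P * U 1) * A6"
    by (simp add: V_def algebra_simps eval_nat_numeral)
  also have "\<dots> = X * (fact (3*m) * A3) * (fact (2*m) * A2) * (fact m * P) * A6"
    by (simp only: B3 B2 B1)
  also have "\<dots> = fact (6*m) * A6 * Q"
    unfolding multinomial [symmetric] Q_def by (simp add: mult_ac)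
  also have "\<dots> = 12 * P^6 * (60 * U 6 * Q)"
    unfolding B6 by (simp add: algebra_simps)
  finally have reduced: "X * V * A6 = 60 * U 6 * Q"
    using p0 by (simp add: P_def mult_ac)
  have A6_eq: "P^2 * A6 = 12 * (6*P-5) * (6*P-1) * Q"
    unfolding A6_def A3_def A2_def Q_def by (simp add: algebra_simps eval_nat_numeral)
  have "12 * Q * (X * (6*P-1) * (6*P-5) * V) = X * V * (P^2 * A6)"
    unfolding A6_eq by (simp only: mult_ac)
  also have "\<dots> = P^2 * (X * V * A6)"
    by (simp add: mult_ac)
  also have "\<dots> = 12 * Q * (5 * P^2 * U 6)"
    unfolding reduced by (simp add: mult_ac)
  finally have "12 * Q * (X * (6*P-1) * (6*P-5) * V) = 12 * Q * (5 * P^2 * U 6)" .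
  moreover have "12 * Q \<noteq> 0"
    using p0 by (simp add: Q_def A3_def A2_def P_def)
  moreover have "6*p-6 = 6*m" "3*p-3 = 3*m" "p-1 = m"
    by (simp_all add: m_def)
  ultimately show ?thesis
    by (simp add: X_def V_def mult_ac)
qed

lemma power_one_plus_mult_cong:
  fixes a q :: int
  shows "[(1 + a*q)^n = 1 + int n*a*q] (mod a^2)"
proof (induction n)
  case (Suc n)
  have "[(1 + a*q)^Suc n = (1 + int n*a*q) * (1 + a*q)] (mod a^2)"
    using cong_mult[OF Suc.IH cong_refl] by (simp add: mult.commute)
  moreover have "(1 + int n*a*q) * (1 + a*q) = 1 + int (Suc n)*a*q + a^2*(int n*q^2)"
    by (simp add: algebra_simps power2_eq_square)
  moreover have "[1 + int (Suc n)*a*q + a^2*(int n*q^2) = 1 + int (Suc n)*a*q] (mod a^2)"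
    by (simp add: cong_iff_dvd_diff)
  ultimately show ?case
    by (metis cong_trans)
qed simp

lemma correction_factor_cong:
  fixes t P :: int
  assumes "[t = 1] (mod P)"
  shows "[t^8 * (6*P-1) * (8*t-9-6*P) = 1] (mod P^2)"
proof -
  obtain q where t: "t = 1 + P*q"
    using assms by (metis cong_iff_lin cong_sym)
  have "[t^8 * ((6*P-1) * (8*t-9-6*P)) = (1 + 8*P*q) * ((6*P-1) * (8*t-9-6*P))] (mod P^2)"
    using power_one_plus_mult_cong[of P q 8] t by (intro cong_mult cong_refl) simp
  also have "(1 + 8*P*q) * ((6*P-1) * (8*t-9-6*P)) = 1 + P^2 * (48*q - 36 - 64*q^2 + 8*P*q*(48*q-36))"
    by (simp add: t algebra_simps power2_eq_square)
  also have "[\<dots> = 1] (mod P^2)"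
    by (simp add: cong_iff_dvd_diff)
  finally show ?thesis
    by (simp add: mult.assoc)
qed

lemma binomial_product_cong:
  fixes p :: nat
  assumes prime: "prime p" and p3: "p > 3"
  defines "P \<equiv> int p"
    and "X \<equiv> int ((6*p-6) choose (3*p-3)) * int ((3*p-3) choose (p-1))"
    and "t \<equiv> (2::int) ^ (p-1)"
  shows "P^4 dvd (18*P-15) * X - 15 * P^2 * (8*t-9-6*P) * t^8"
proof -
  define U where "U = prod_nonmultiples p"
  define V where "V = U 3 * U 2 * U 1"
  define E where "E = t^8 * (6*P-1) * (8*t-9-6*P)"
  have odd: "odd p" using prime p3 prime_odd_nat by auto
  have U_cong: "[U n = fact (p-1) ^ n] (mod P^2)" for n
    unfolding U_def P_def by (rule prod_nonmultiples_cong[OF odd])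
  have identity: "X * (6*P-1) * (6*P-5) * V = 5 * P^2 * U 6"
    using binomial_product_identity[of p] p3 by (simp add: X_def P_def U_def V_def)
  have V_cong: "[V = fact (p-1) ^ 6] (mod P^2)"
    using cong_mult[OF cong_mult[OF U_cong[of 3] U_cong[of 2]] U_cong[of 1]]
    unfolding V_def power_add[symmetric] by simp
  have "[2^(p-1) = (1::nat)] (mod p)"
    by (rule fermat_theorem[OF prime]) (use p3 in \<open>auto dest: dvd_imp_le\<close>)
  then have "[t = 1] (mod P)"
    unfolding t_def P_def by (metis cong_int_iff of_nat_1 of_nat_numeral of_nat_power)
  then have "[E * V = 1 * fact (p-1) ^ 6] (mod P^2)"
    unfolding E_def by (intro cong_mult correction_factor_cong V_cong)
  then have "[U 6 = E * V] (mod P^2)"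
    using U_cong[of 6] by (metis cong_sym cong_trans mult_1)
  then obtain k where k: "U 6 - E * V = P^2 * k"
    by (metis cong_iff_dvd_diff cong_sym dvdE)
  have "(6*P-1) * V * ((18*P-15) * X - 15 * P^2 * (8*t-9-6*P) * t^8)
      = 3 * (X * (6*P-1) * (6*P-5) * V) - 15 * P^2 * (E * V)"
    by (simp add: E_def algebra_simps)
  also have "\<dots> = 15 * P^2 * (U 6 - E * V)"
    unfolding identity by (simp add: algebra_simps)
  also have "\<dots> = P^4 * (15 * k)"
    unfolding k by (simp add: algebra_simps eval_nat_numeral)
  finally have divides: "P^4 dvd (6*P-1) * V * ((18*P-15) * X - 15 * P^2 * (8*t-9-6*P) * t^8)"
    by (metis dvd_triv_left)
  have "\<not> p dvd fact (p-1)"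
    using prime p3 by (simp add: prime_dvd_fact_iff)
  then have "coprime (fact (p-1)) P"
    using prime unfolding P_def
    by (metis coprime_commute of_nat_dvd_iff of_nat_fact prime_imp_coprime prime_nat_int_transfer)
  then have "coprime V (P^2)"
    using cong_imp_coprime[OF cong_sym[OF V_cong]] by simp
  moreover have "coprime (6*P-1) P"
  proof (rule coprimeI)
    fix d assume "d dvd 6*P-1" "d dvd P"
    then have "d dvd 6*P - (6*P-1)" by (metis dvd_diff dvd_mult)
    then show "is_unit d" by simp
  qed
  ultimately have "coprime (P^4) ((6*P-1) * V)"
    by (simp add: coprime_commute)
  then show ?thesis
    using divides coprime_dvd_mult_right_iff by blast
qed

lemma quotient_of_div_denom_dvd:
  assumes "b > 0"
  shows "snd (quotient_of (of_int a / of_int b)) dvd b"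
proof -
  obtain n d where q: "quotient_of (of_int a / of_int b) = (n, d)"
    by (cases "quotient_of (of_int a / of_int b)")
  have "(of_int a / of_int b :: rat) = of_int n / of_int d"
    using quotient_of_div[OF q] .
  then have "a * d = n * b"
    using assms quotient_of_denom_pos[OF q] by (simp add: field_simps flip: of_int_mult of_int_eq_iff)
  then have "d dvd n * b"
    by (metis dvd_triv_right)
  with quotient_of_coprime[OF q] show ?thesis
    by (simp add: q coprime_commute coprime_dvd_mult_right_iff)
qed

lemma rat_cong_of_int_div:
  assumes "d > 0" and "coprime d m" and "m dvd a - b * d"
  shows "rat_cong (of_int a / of_int d) (of_int b) m"
proof -
  obtain k where k: "a - b * d = m * k"
    using assms(3) by (elim dvdE)
  define r where "r = (of_int k / of_int d :: rat)"
  have "of_int a / of_int d - of_int b = of_int m * r"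
    using assms(1) k by (simp add: r_def field_simps flip: of_int_mult of_int_diff)
  moreover have "coprime (snd (quotient_of r)) m"
    using quotient_of_div_denom_dvd[OF assms(1), of k] assms(2) r_def coprime_divisors dvd_refl by blast
  ultimately show ?thesis
    unfolding rat_cong_def by blast
qed

theorem lemma3p1:
  fixes p :: nat
  assumes "prime p" and "p > 3"
  shows "rat_cong
     ((18 * of_nat p - 15) / 4 ^ (4 * p - 4)
        * of_nat ((6 * p - 6) choose (3 * p - 3)) * of_nat ((3 * p - 3) choose (p - 1)))
     (15 * (of_nat p)^2 * (-1 - 6 * of_nat p + 8 * of_nat p * fermat_quotient2 p))
     (int p ^ 4)"
proof -
  define P where "P = int p"
  define X where "X = int ((6*p-6) choose (3*p-3)) * int ((3*p-3) choose (p-1))"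
  define t where "t = (2::int) ^ (p-1)"
  have "(4::int) ^ (4*p-4) = (2^2) ^ (4*(p-1))"
    by (simp add: diff_mult_distrib2)
  also have "\<dots> = t^8"
    unfolding t_def power_mult [symmetric] by (simp add: mult_ac)
  finally have "(4::rat) ^ (4*p-4) = of_int (t^8)"
    by (metis of_int_numeral of_int_power)
  then have lhs: "(18 * of_nat p - 15) / 4 ^ (4*p-4) * of_nat ((6*p-6) choose (3*p-3))
      * of_nat ((3*p-3) choose (p-1)) = (of_int ((18*P-15) * X) / of_int (t^8) :: rat)"
    unfolding X_def P_def by simp
  have fermat_quotient: "of_nat p * fermat_quotient2 p = of_int (t - 1)"
    unfolding fermat_quotient2_def t_def using assms by simp
  have rhs: "15 * (of_nat p)^2 * (-1 - 6 * of_nat p + 8 * of_nat p * fermat_quotient2 p)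
      = (of_int (15 * P^2 * (8*t-9-6*P)) :: rat)"
    unfolding mult.assoc [of 8] fermat_quotient P_def by simp
  have "odd p"
    using prime_odd_nat[OF assms(1)] assms(2) by simp
  then have "coprime (t^8) (int p ^ 4)"
    unfolding t_def by (simp flip: power_mult)
  then show ?thesis
    unfolding lhs rhs using binomial_product_cong[OF assms]
    by (intro rat_cong_of_int_div) (simp_all add: P_def X_def t_def)
qed

end
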